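(* Let $\nu\ge0$, $p_{0x}=-2\cosh(2\pi\nu)$, $\theta_\infty\in\mathbb C$, and suppose $$3p_{0x}^2+p_{0x}^3-12p_{0x}\big(1+\cos(\pi\theta_\infty)\big)+4\cos^2(\pi\theta_\infty)+16\cos(\pi\theta_\infty)+8=0$$ with $(\cos\pi\theta_\infty,p_{0x})$ on the portion of this curve between $(-1,-2)$ and $(1,-7)$, i.e. $\cos(\pi\theta_\infty)\in[-1,1]$. Then $\theta_\infty$ is real and $0\le\nu\le\frac2\pi\ln\mathbf G$, where $\mathbf G=\frac{1+\sqrt5}2$ is the golden ratio. Moreover, with $$c_1(\nu)=2+3\cosh(2\pi\nu)-\cosh(3\pi\nu)-3\cosh(\pi\nu),$$ $$c_2(\nu)=96\cosh(\pi\nu)+52\cosh(3\pi\nu)+12\cosh(5\pi\nu)-50-78\cosh(2\pi\nu)-30\cosh(4\pi\nu)-2\cosh(6\pi\nu),$$ one has $c_2(\nu)\ge0$, $\big|c_1(\nu)-\frac i2\sqrt{c_2(\nu)}\big|=1$ (positive square root), and $$\theta_\infty=\pm\frac1\pi\arg\Big(c_1(\nu)-\frac i2\sqrt{c_2(\nu)}\Big)+2m+1\quad\text{for some sign and some }m\in\mathbb Z,$$ where the argument is chosen with $-\pi\le\arg\big(c_1(\nu)-\frac i2\sqrt{c_2(\nu)}\big)\le0$.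
   Context: This is the cubic relation among the monodromy data $p_{0x}=p_{x1}=p_{01}$ and $p_\infty=2\cos(\pi\theta_\infty)$, $\theta_\infty=2\mu$, of the Fuchsian system associated with the Painlevé VI equation $PVI_\mu$, specialized to $p_{0x}=p_{x1}=p_{01}$; the portion between $(\cos\pi\theta_\infty,p_{0x})=(-1,-2)$ and $(1,-7)$ is the part of the branch with $p_{0x}\le-2$ and $-1\le\cos\pi\theta_\infty\le1$. *)

theory Defs
  imports "HOL-Analysis.Analysis"
begin

definition golden_ratio :: real where
  "golden_ratio = (1 + sqrt 5) / 2"

definition c1 :: "real \<Rightarrow> real" where
  "c1 \<nu> = 2 + 3 * cosh (2*pi*\<nu>) - cosh (3*pi*\<nu>) - 3 * cosh (pi*\<nu>)"

definition c2 :: "real \<Rightarrow> real" where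
  "c2 \<nu> = 96 * cosh (pi*\<nu>) + 52 * cosh (3*pi*\<nu>) + 12 * cosh (5*pi*\<nu>) - 50
           - 78 * cosh (2*pi*\<nu>) - 30 * cosh (4*pi*\<nu>) - 2 * cosh (6*pi*\<nu>)"

end

theory Submission
  imports Defs
begin

text \<open>
  Put \<open>u = cosh (\<pi>\<nu>) \<ge> 1\<close>, so that \<open>p\<^sub>0\<^sub>x = 2 - 4u\<^sup>2\<close>. As a polynomial in
  \<open>C = cos (\<pi>\<theta>\<^sub>\<infinity>)\<close> the cubic relation factors as
  \<open>4 (C - (1 - 6u\<^sup>2 + 4u\<^sup>3)) (C - (1 - 6u\<^sup>2 - 4u\<^sup>3))\<close>; the second root is at most \<open>-7\<close>,
  so \<open>C = 1 - 6u\<^sup>2 + 4u\<^sup>3 = -c\<^sub>1(\<nu>)\<close>. The constraint \<open>C \<le> 1\<close> is \<open>u \<le> 3/2 = cosh (2 ln G)\<close>,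
  and \<open>c\<^sub>2 = 4 (1 - c\<^sub>1\<^sup>2)\<close> makes \<open>c\<^sub>1 - (i/2) \<surd>c\<^sub>2\<close> a unit complex number \<open>e\<^sup>i\<^sup>a\<close> with
  \<open>cos a = c\<^sub>1 = -cos (\<pi>\<theta>\<^sub>\<infinity>)\<close>, which determines \<open>\<theta>\<^sub>\<infinity>\<close> up to sign and even shifts.
  That \<open>\<theta>\<^sub>\<infinity>\<close> is real comes first: if \<open>cos z\<close> is real and \<open>Im z \<noteq> 0\<close> then
  \<open>sin (Re z) = 0\<close>, so \<open>|cos z| = cosh (Im z) > 1\<close>.
\<close>

lemma cosh_nat_mult_real: "cosh (real k * t) = (exp t ^ k + inverse (exp t) ^ k) / 2"
  by (simp add: cosh_def exp_of_nat_mult exp_minus power_inverse)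

lemma cosh_double_real: "cosh (2 * x) = 2 * cosh x ^ 2 - (1::real)"
  by (simp add: cosh_double sinh_square_eq)

lemma cosh_multiples_exp:
  fixes x :: real
  defines "e \<equiv> exp x"
  shows "cosh x = (e + inverse e) / 2"
    and "cosh (numeral k * x) = (e ^ numeral k + inverse e ^ numeral k) / 2"
  using cosh_nat_mult_real[of 1 x] cosh_nat_mult_real[of "numeral k" x] by (simp_all add: e_def)

lemma c1_eq_cosh_poly: "c1 x = -1 + 6 * cosh (pi*x) ^ 2 - 4 * cosh (pi*x) ^ 3"
  unfolding c1_def mult.assoc cosh_multiples_exp[where x = "pi*x"]
  by (simp add: field_simps power_inverse) algebra

lemma c2_eq_one_minus_c1_sq: "c2 x = 4 * (1 - c1 x ^ 2)"
  unfolding c2_def c1_def mult.assoc cosh_multiples_exp[where x = "pi*x"]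
  by (simp add: field_simps power_inverse) algebra

lemma Reals_if_cos_Reals_bounded:
  fixes z :: complex
  assumes "cos z \<in> \<real>" and "\<bar>Re (cos z)\<bar> \<le> 1"
  shows "z \<in> \<real>"
proof (rule ccontr)
  assume "z \<notin> \<real>"
  hence "Im z \<noteq> 0" by (simp add: complex_is_Real_iff)
  hence "exp (Im z) \<noteq> exp (- Im z)" by simp
  moreover have "Im (cos z) = 0" using assms(1) by (simp add: complex_is_Real_iff)
  ultimately have "sin (Re z) = 0" by (simp add: Im_cos)
  hence "\<bar>cos (Re z)\<bar> = 1" using sin_cos_squared_add[of "Re z"] by (simp add: abs_square_eq_1)
  moreover have "cosh (Im z) > 1"
    using cosh_real_strict_mono[of 0 "\<bar>Im z\<bar>"] \<open>Im z \<noteq> 0\<close> by simp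
  moreover have "Re (cos z) = cos (Re z) * cosh (Im z)"
    by (simp add: Re_cos cosh_def)
  ultimately have "\<bar>Re (cos z)\<bar> > 1" by (simp add: abs_mult)
  thus False using assms(2) by simp
qed

lemma monodromy_cubic_factor:
  fixes u C :: real
  shows "3 * (2 - 4*u^2)^2 + (2 - 4*u^2)^3 - 12 * (2 - 4*u^2) * (1 + C) + 4 * C^2 + 16 * C + 8
         = 4 * (C - (1 - 6*u^2 + 4*u^3)) * (C - (1 - 6*u^2 - 4*u^3))"
  by (simp add: algebra_simps power2_eq_square power3_eq_cube)

lemma monodromy_cubic_root:
  fixes u C :: real
  assumes "u \<ge> 1" "C \<ge> -1"
    and "3 * (2 - 4*u^2)^2 + (2 - 4*u^2)^3 - 12 * (2 - 4*u^2) * (1 + C) + 4 * C^2 + 16 * C + 8 = 0"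
  shows "C = 1 - 6*u^2 + 4*u^3"
proof -
  have "u^2 \<ge> 1" "u^3 \<ge> 1" using \<open>u \<ge> 1\<close> by (simp_all add: one_le_power)
  hence "C - (1 - 6*u^2 - 4*u^3) \<noteq> 0" using \<open>C \<ge> -1\<close> by linarith
  thus ?thesis using assms(3) unfolding monodromy_cubic_factor by simp
qed

lemma le_three_halves_if_cubic_le_one:
  fixes u :: real
  assumes "1 - 6*u^2 + 4*u^3 \<le> 1"
  shows "u \<le> 3/2"
proof (rule ccontr)
  assume "\<not> u \<le> 3/2"
  hence "u^2 * (4*u - 6) > 0" by simp
  thus False using assms by (simp add: algebra_simps power2_eq_square power3_eq_cube)
qed

lemma cosh_two_ln_golden_ratio: "cosh (2 * ln golden_ratio) = 3/2"
proof -
  have G: "golden_ratio > 0" by (simp add: golden_ratio_def add_pos_nonneg)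
  have G2: "golden_ratio ^ 2 = (3 + sqrt 5) / 2"
    by (simp add: golden_ratio_def power2_eq_square field_simps)
  have "golden_ratio ^ 2 * ((3 - sqrt 5) / 2) = 1"
    unfolding G2 by (simp add: algebra_simps)
  hence "inverse (golden_ratio ^ 2) = (3 - sqrt 5) / 2" by (rule inverse_unique)
  hence "golden_ratio ^ 2 + inverse (golden_ratio ^ 2) = 3" by (simp only: G2) (simp add: field_simps)
  moreover have "2 * ln golden_ratio = ln (golden_ratio ^ 2)" using G by (simp add: ln_realpow)
  ultimately show ?thesis using G by (simp add: cosh_ln_real)
qed

lemma le_ln_golden_ratio_if_cosh_le:
  fixes x :: real
  assumes "x \<ge> 0" and "cosh (pi*x) \<le> 3/2"
  shows "x \<le> 2 / pi * ln golden_ratio"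
proof -
  have "ln golden_ratio \<ge> 0" by (simp add: golden_ratio_def real_le_rsqrt)
  hence "pi*x \<le> 2 * ln golden_ratio"
    using assms cosh_real_nonneg_le_iff[of "pi*x" "2 * ln golden_ratio"]
    by (simp add: cosh_two_ln_golden_ratio)
  thus ?thesis by (simp add: field_simps)
qed

lemma cmod_real_minus_i_sqrt_complement:
  fixes x :: real
  assumes "x^2 \<le> 1"
  shows "cmod (complex_of_real x - \<i> / 2 * complex_of_real (sqrt (4 * (1 - x^2)))) = 1"
proof -
  have "sqrt (4 * (1 - x^2)) = 2 * sqrt (1 - x^2)" by (simp only: real_sqrt_mult) simp
  hence "complex_of_real x - \<i> / 2 * complex_of_real (sqrt (4 * (1 - x^2))) = Complex x (- sqrt (1 - x^2))"
    by (simp add: complex_eq_iff)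
  thus ?thesis using assms by (simp add: cmod_def)
qed

lemma cos_eq_minus_cos_cases:
  fixes r a :: real
  assumes "cos (pi * r) = - cos a"
  shows "\<exists>s \<in> {-1, 1::real}. \<exists>m::int. r = s * a / pi + 2 * of_int m + 1"
proof -
  have "cos (pi * r) = cos (a + pi)" using assms by simp
  then obtain n where "n \<in> \<int>" and n: "pi * r = a + pi + 2*n*pi \<or> pi * r = -(a + pi) + 2*n*pi"
    unfolding cos_eq by blast
  then obtain k :: int where k: "n = of_int k" by (auto elim: Ints_cases)
  from n show ?thesis
  proof
    assume "pi * r = a + pi + 2*n*pi"
    hence "r = 1 * a / pi + 2 * of_int k + 1" using k by (simp add: field_simps)
    thus ?thesis by blast
  next
    assume "pi * r = -(a + pi) + 2*n*pi"
    hence "r = (-1) * a / pi + 2 * of_int (k - 1) + 1" using k by (simp add: field_simps)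
    thus ?thesis by blast
  qed
qed

theorem lemma2:
  fixes \<nu> p0x :: real and \<theta> :: complex
  assumes "\<nu> \<ge> 0"
    and "p0x = - 2 * cosh (2*pi*\<nu>)"
    and "3 * (of_real p0x)^2 + (of_real p0x)^3 - 12 * of_real p0x * (1 + cos (of_real pi * \<theta>))
         + 4 * (cos (of_real pi * \<theta>))^2 + 16 * cos (of_real pi * \<theta>) + 8 = (0::complex)"
    and "cos (of_real pi * \<theta>) \<in> \<real>"
    and "-1 \<le> Re (cos (of_real pi * \<theta>))" and "Re (cos (of_real pi * \<theta>)) \<le> 1"
  shows "\<theta> \<in> \<real>
    \<and> 0 \<le> \<nu> \<and> \<nu> \<le> 2 / pi * ln golden_ratio
    \<and> c2 \<nu> \<ge> 0
    \<and> cmod (complex_of_real (c1 \<nu>) - \<i> / 2 * complex_of_real (sqrt (c2 \<nu>))) = 1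
    \<and> (\<forall>a. -pi \<le> a \<and> a \<le> 0 \<and>
          complex_of_real (c1 \<nu>) - \<i> / 2 * complex_of_real (sqrt (c2 \<nu>)) = cis a \<longrightarrow>
          (\<exists>s \<in> {-1, 1::real}. \<exists>m::int. \<theta> = complex_of_real (s * a / pi + 2 * of_int m + 1)))"
proof -
  have "of_real pi * \<theta> \<in> \<real>"
    using assms(5,6) by (intro Reals_if_cos_Reals_bounded[OF assms(4)]) (simp add: abs_le_iff)
  hence "\<theta> \<in> \<real>" by (simp add: complex_is_Real_iff)
  then obtain r where \<theta>: "\<theta> = of_real r" by (rule Reals_cases)
  define C where "C = cos (pi * r)"
  define u where "u = cosh (pi * \<nu>)"
  have cos\<theta>: "cos (of_real pi * \<theta>) = of_real C" by (simp add: \<theta> C_def flip: cos_of_real)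
  have C_bounds: "-1 \<le> C" "C \<le> 1" using assms(5,6) by (simp_all add: cos\<theta>)
  have "p0x = 2 - 4 * u^2" using assms(2) cosh_double_real[of "pi*\<nu>"] by (simp add: u_def mult.assoc)
  moreover have "complex_of_real (3 * p0x^2 + p0x^3 - 12 * p0x * (1 + C) + 4 * C^2 + 16 * C + 8) = 0"
    using assms(3) unfolding cos\<theta> by simp
  hence "3 * p0x^2 + p0x^3 - 12 * p0x * (1 + C) + 4 * C^2 + 16 * C + 8 = 0"
    by (simp only: of_real_eq_0_iff)
  ultimately have C: "C = 1 - 6*u^2 + 4*u^3"
    using C_bounds by (intro monodromy_cubic_root) (simp_all add: u_def cosh_real_ge_1)
  have c1: "c1 \<nu> = - C" by (simp add: c1_eq_cosh_poly C u_def)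
  have c1_sq: "c1 \<nu> ^ 2 \<le> 1" using C_bounds by (simp add: c1 abs_square_le_1)
  have "u \<le> 3/2" using C_bounds C by (intro le_three_halves_if_cubic_le_one) simp
  hence "\<nu> \<le> 2 / pi * ln golden_ratio"
    using assms(1) by (intro le_ln_golden_ratio_if_cosh_le) (simp_all add: u_def)
  moreover from c1_sq have "c2 \<nu> \<ge> 0" and "cmod (complex_of_real (c1 \<nu>) - \<i> / 2 * complex_of_real (sqrt (c2 \<nu>))) = 1"
    unfolding c2_eq_one_minus_c1_sq by (simp, rule cmod_real_minus_i_sqrt_complement)
  \<comment> \<open>Any argument \<open>a\<close> works, not just one in \<open>[-\<pi>, 0]\<close>: the sign \<open>s\<close> absorbs the choice.\<close>
  moreover have "\<exists>s \<in> {-1, 1::real}. \<exists>m::int. \<theta> = of_real (s * a / pi + 2 * of_int m + 1)"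
    if "complex_of_real (c1 \<nu>) - \<i> / 2 * complex_of_real (sqrt (c2 \<nu>)) = cis a" for a
  proof -
    have "cos a = c1 \<nu>" using arg_cong[OF that, of Re] by simp
    hence "cos (pi * r) = - cos a" by (simp add: c1 C_def)
    thus ?thesis unfolding \<theta> using cos_eq_minus_cos_cases by blast
  qed
  ultimately show ?thesis using assms(1) \<open>\<theta> \<in> \<real>\<close> by blast
qed

end
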